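(* If $\sigma_A\alpha_i-\sigma_S\mu_S>0$ for every individual $i$, then the system is in the full action state: for every $t_{start}\ge 0$, every individual acts infinitely (countably) many times after $t_{start}$.
   Context: Model: Fix an integer $n\ge 2$ (number of individuals) and parameters $\sigma_A,\sigma_S\ge 0$, $\sigma_C>0$, $\mu_S\in[0,1]$, $\mu_C>0$, $r>0$, $\tau\in(0,1)$, $\alpha_1,\dots,\alpha_n\in(-1,1)$. Individual $i$ has state $(x_i(t),y_i(t))$, $x_i\in(-1,1)$, $y_i\in[0,1]$, and $\gamma_i(t)=\frac{1}{n-1}\sum_{j\neq i}y_j(t)$. Between action events the state evolves by $\dot x_i=[\sigma_A\alpha_i+\sigma_S(\gamma_i-\mu_S)]\,\sigma_C(\gamma_i+\mu_C)(1-x_i)(1+x_i)$, $\dot y_i=-ry_i$. Individual $i$ "acts" at a time $t$ when $x_i(t)$ reaches the threshold $\tau$ (i.e. $x_i(t)\ge\tau$); immediately afterwards $x_i$ is reset to $0$ and $y_i$ is reset to $1$, and the continuous evolution resumes from the new state. Initial data satisfy $x_j(0)<\tau$, $y_j(0)=0$. *)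

theory Defs
  imports "HOL-Analysis.Analysis"
begin

text \<open>Individuals are indexed by 0,...,n-1. The state of individual i at time t is
  (x i t, y i t); at an action time the stored value is the post-reset value.\<close>

definition gamma :: "nat \<Rightarrow> (nat \<Rightarrow> real \<Rightarrow> real) \<Rightarrow> nat \<Rightarrow> real \<Rightarrow> real" where
  "gamma n y i t = (\<Sum>j\<in>{0..<n} - {i}. y j t) / (real n - 1)"

definition xrate ::
  "real \<Rightarrow> real \<Rightarrow> real \<Rightarrow> real \<Rightarrow> real \<Rightarrow> real \<Rightarrow> real \<Rightarrow> real \<Rightarrow> real" where
  "xrate sA sS sC muS muC a g xi =
     (sA * a + sS * (g - muS)) * sC * (g + muC) * (1 - xi) * (1 + xi)"

text \<open>A trajectory of the hybrid system on [0,\<infinity>), with action-time sets acts i: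
  continuous evolution by the ODE (right derivatives, since gamma jumps when others act),
  continuity except at own action times, x below the threshold at all times,
  and at each action time x reaches the threshold from the left and is reset to (0,1).\<close>

definition is_trajectory ::
  "nat \<Rightarrow> real \<Rightarrow> real \<Rightarrow> real \<Rightarrow> real \<Rightarrow> real \<Rightarrow> real \<Rightarrow> real \<Rightarrow> (nat \<Rightarrow> real)
   \<Rightarrow> (nat \<Rightarrow> real \<Rightarrow> real) \<Rightarrow> (nat \<Rightarrow> real \<Rightarrow> real) \<Rightarrow> (nat \<Rightarrow> real set) \<Rightarrow> bool" where
  "is_trajectory n sA sS sC muS muC r tau alpha x y acts \<longleftrightarrow>
    (\<forall>i<n.
       -1 < x i 0 \<and> x i 0 < tau \<and> y i 0 = 0 \<and>
       acts i \<subseteq> {0<..} \<and>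
       (\<forall>t\<ge>0. x i t < tau) \<and>
       (\<forall>t\<ge>0. (x i has_real_derivative
                 xrate sA sS sC muS muC (alpha i) (gamma n y i t) (x i t)) (at t within {t..})) \<and>
       (\<forall>t\<ge>0. (y i has_real_derivative (- r * y i t)) (at t within {t..})) \<and>
       (\<forall>t>0. t \<notin> acts i \<longrightarrow> isCont (x i) t \<and> isCont (y i) t) \<and>
       (\<forall>t\<in>acts i. (x i \<longlongrightarrow> tau) (at_left t) \<and> x i t = 0 \<and> y i t = 1))"

end

(*
  Between resets y_j decays exponentially from 0 or 1, so it stays nonnegative and so does
  every gamma_i. The bracket of the x-equation is then at least the drift
  sA alpha_i - sS muS > 0, so dx_i/dt has the sign of (1 - x_i)(1 + x_i): x_i never falls
  to -1, and while i does not act, x_i is nondecreasing and grows at a rate bounded below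
  by a positive constant. If i stopped acting, x_i would thus grow at least linearly and
  cross the threshold tau. Since gamma_i jumps whenever another individual acts, only
  right derivatives are available, so every monotonicity step uses a mean value
  inequality for right derivatives.
*)
theory Submission
  imports Defs
begin

lemma compact_interval_vimage_closed:
  fixes f :: "real \<Rightarrow> 'a::topological_space"
  assumes "continuous_on {a..b} f" and "closed T"
  shows "compact ({a..b} \<inter> f -` T)"
proof -
  have "closed ({a..b} \<inter> f -` T)" using assms by (intro continuous_closed_preimage) auto
  from compact_Int_closed[OF compact_Icc[of a b] this] show ?thesis by simp
qed

lemma right_derivative_pos_imp_le:
  fixes f D :: "real \<Rightarrow> real"
  assumes "a \<le> b" and cont: "continuous_on {a..b} f"
    and deriv: "\<And>t. a \<le> t \<Longrightarrow> t < b \<Longrightarrow> (f has_real_derivative D t) (at t within {t..})"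
    and pos: "\<And>t. a \<le> t \<Longrightarrow> t < b \<Longrightarrow> 0 < D t"
  shows "f a \<le> f b"
proof -
  \<comment> \<open>The last point m of [a,b] with f m \<ge> f a must be b: a positive right derivative
    at m would push f above f m just after m.\<close>
  define K where "K = {a..b} \<inter> f -` {f a..}"
  have "compact K" unfolding K_def using cont by (rule compact_interval_vimage_closed) simp
  moreover have "a \<in> K" using \<open>a \<le> b\<close> by (simp add: K_def)
  ultimately obtain m where "m \<in> K" and m_max: "\<forall>t\<in>K. t \<le> m"
    using compact_attains_sup by blast
  have "m = b"
  proof (rule ccontr)
    assume "m \<noteq> b"
    with \<open>m \<in> K\<close> have m: "a \<le> m" "m < b" "f a \<le> f m" by (auto simp: K_def)
    obtain d where "d > 0" and incr: "\<forall>h>0. m + h \<in> {m..} \<longrightarrow> h < d \<longrightarrow> f m < f (m + h)"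
      using has_real_derivative_pos_inc_right[OF deriv[OF m(1,2)] pos[OF m(1,2)]] by blast
    define h where "h = min (d / 2) (b - m)"
    have "0 < h" "h < d" "m + h \<le> b" using \<open>d > 0\<close> m by (auto simp: h_def)
    with incr have "f m < f (m + h)" by simp
    with m \<open>0 < h\<close> \<open>m + h \<le> b\<close> have "m + h \<in> K" by (simp add: K_def)
    with m_max \<open>0 < h\<close> show False by force
  qed
  with \<open>m \<in> K\<close> show ?thesis by (simp add: K_def)
qed

lemma right_derivative_ge_imp_le:
  fixes f D :: "real \<Rightarrow> real"
  assumes "a \<le> b" and cont: "continuous_on {a..b} f"
    and deriv: "\<And>t. a \<le> t \<Longrightarrow> t < b \<Longrightarrow> (f has_real_derivative D t) (at t within {t..})"
    and ge: "\<And>t. a \<le> t \<Longrightarrow> t < b \<Longrightarrow> c \<le> D t"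
  shows "f a + c * (b - a) \<le> f b"
proof -
  have approx: "f a + c * (b - a) \<le> f b + e * (b - a)" if "0 < e" for e
  proof -
    have "f a - (c - e) * a \<le> f b - (c - e) * b"
    proof (rule right_derivative_pos_imp_le[OF \<open>a \<le> b\<close>])
      show "continuous_on {a..b} (\<lambda>t. f t - (c - e) * t)"
        by (intro continuous_intros cont)
      fix t assume "a \<le> t" "t < b"
      show "((\<lambda>t. f t - (c - e) * t) has_real_derivative D t - (c - e)) (at t within {t..})"
        using deriv[OF \<open>a \<le> t\<close> \<open>t < b\<close>] by (auto intro!: derivative_eq_intros)
      show "0 < D t - (c - e)" using ge[OF \<open>a \<le> t\<close> \<open>t < b\<close>] \<open>0 < e\<close> by simp
    qed
    then show ?thesis by (simp add: algebra_simps)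
  qed
  show ?thesis
  proof (cases "a = b")
    case False
    with \<open>a \<le> b\<close> have "0 < b - a" by simp
    show ?thesis
    proof (rule field_le_epsilon)
      fix e :: real assume "0 < e"
      with approx[of "e / (b - a)"] \<open>0 < b - a\<close> show "f a + c * (b - a) \<le> f b + e" by simp
    qed
  qed simp
qed

lemma right_derivative_nonneg_imp_le:
  fixes f D :: "real \<Rightarrow> real"
  assumes "a \<le> b" and "continuous_on {a..b} f"
    and "\<And>t. a \<le> t \<Longrightarrow> t < b \<Longrightarrow> (f has_real_derivative D t) (at t within {t..})"
    and "\<And>t. a \<le> t \<Longrightarrow> t < b \<Longrightarrow> 0 \<le> D t"
  shows "f a \<le> f b"
  using right_derivative_ge_imp_le[of a b f D 0] assms by simp

lemma right_derivative_nonneg_while_above_imp_le: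
  fixes f D :: "real \<Rightarrow> real"
  assumes "a \<le> b" and cont: "continuous_on {a..b} f"
    and deriv: "\<And>t. a \<le> t \<Longrightarrow> t < b \<Longrightarrow> (f has_real_derivative D t) (at t within {t..})"
    and "L < f a"
    and nonneg: "\<And>t. a \<le> t \<Longrightarrow> t < b \<Longrightarrow> L < f t \<Longrightarrow> 0 \<le> D t"
  shows "f a \<le> f b"
proof -
  have above: "L < f t" if "t \<in> {a..b}" for t
  proof (rule ccontr)
    assume "\<not> L < f t"
    \<comment> \<open>f stays above L, and hence D stays nonnegative, up to the first time w where f \<le> L.\<close>
    define K where "K = {a..b} \<inter> f -` {..L}"
    have "compact K" unfolding K_def using cont by (rule compact_interval_vimage_closed) simp
    moreover have "t \<in> K" using that \<open>\<not> L < f t\<close> by (simp add: K_def)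
    ultimately obtain w where "w \<in> K" and w_min: "\<forall>t\<in>K. w \<le> t"
      using compact_attains_inf by blast
    then have w: "a \<le> w" "w \<le> b" "f w \<le> L" by (auto simp: K_def)
    have "f a \<le> f w"
    proof (rule right_derivative_nonneg_imp_le[OF \<open>a \<le> w\<close>])
      show "continuous_on {a..w} f" by (rule continuous_on_subset[OF cont]) (use \<open>w \<le> b\<close> in auto)
      fix u assume "a \<le> u" "u < w"
      then have "u \<notin> K" using w_min by (meson not_le)
      with \<open>a \<le> u\<close> \<open>u < w\<close> \<open>w \<le> b\<close> have "L < f u" by (simp add: K_def not_le)
      with \<open>a \<le> u\<close> \<open>u < w\<close> \<open>w \<le> b\<close>
      show "(f has_real_derivative D u) (at u within {u..})" "0 \<le> D u"
        by (simp_all add: deriv nonneg)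
    qed
    with w \<open>L < f a\<close> show False by simp
  qed
  show ?thesis
  proof (rule right_derivative_nonneg_imp_le[OF \<open>a \<le> b\<close> cont])
    fix u assume "a \<le> u" "u < b"
    with above[of u] show "(f has_real_derivative D u) (at u within {u..})" "0 \<le> D u"
      by (simp_all add: deriv nonneg)
  qed
qed

lemma continuous_on_if_right_derivative:
  fixes z :: "real \<Rightarrow> real"
  assumes "(z has_real_derivative D) (at s within {s..})"
    and "\<And>t. s < t \<Longrightarrow> t \<le> b \<Longrightarrow> isCont z t"
  shows "continuous_on {s..b} z"
  unfolding continuous_on_eq_continuous_within
proof
  fix t assume t: "t \<in> {s..b}"
  show "continuous (at t within {s..b}) z"
  proof (cases "t = s")
    case True
    have "continuous (at s within {s..}) z" using DERIV_continuous[OF assms(1)] .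
    then show ?thesis using True by (auto intro: continuous_within_subset)
  next
    case False
    then show ?thesis using t assms(2) by (auto intro: continuous_at_imp_continuous_within)
  qed
qed

lemma last_reset_before:
  fixes z :: "real \<Rightarrow> real" and A :: "real set"
  assumes "A \<subseteq> {0<..}" and "0 \<le> t"
    and reset: "\<And>a. a \<in> A \<Longrightarrow> z a = v"
    and cont: "\<And>u. 0 < u \<Longrightarrow> u \<notin> A \<Longrightarrow> isCont z u"
  obtains s where "0 \<le> s" "s \<le> t" "{s<..t} \<inter> A = {}" "s = 0 \<or> z s = v"
proof -
  \<comment> \<open>s is the supremum of the resets up to t. If s is not a reset itself, then resets
    accumulate at s from the left, and continuity at s forces z s = v.\<close>
  define R where "R = insert 0 (A \<inter> {..t})"
  define s where "s = Sup R"
  have "R \<noteq> {}" and bdd: "bdd_above R" using \<open>0 \<le> t\<close> by (auto simp: R_def bdd_above_def)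
  then have R_le: "q \<le> s" if "q \<in> R" for q using that by (simp add: s_def cSup_upper)
  have "0 \<le> s" by (rule R_le) (simp add: R_def)
  have "s \<le> t" unfolding s_def using \<open>R \<noteq> {}\<close> \<open>0 \<le> t\<close> by (intro cSup_least) (auto simp: R_def)
  have disjoint: "{s<..t} \<inter> A = {}"
  proof -
    have "u \<le> s" if "u \<in> A" "u \<le> t" for u using that by (intro R_le) (simp add: R_def)
    then show ?thesis by (meson disjoint_iff greaterThanAtMost_iff not_le)
  qed
  have at_reset: "s = 0 \<or> z s = v"
  proof (cases "s \<in> R")
    case True
    then show ?thesis using reset by (auto simp: R_def)
  next
    case False
    with \<open>0 \<le> s\<close> have "0 < s" "s \<notin> A" using \<open>s \<le> t\<close> by (auto simp: R_def)
    have "z s = v"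
    proof (rule ccontr)
      assume "z s \<noteq> v"
      then have "0 < dist (z s) v" by simp
      then obtain d where "d > 0" and near: "\<forall>u. dist u s < d \<longrightarrow> dist (z u) (z s) < dist (z s) v"
        using cont[OF \<open>0 < s\<close> \<open>s \<notin> A\<close>] unfolding continuous_at_eps_delta by blast
      have "max (s - d) 0 < Sup R" using \<open>0 < s\<close> \<open>d > 0\<close> by (simp add: s_def[symmetric])
      then obtain q where "q \<in> R" "max (s - d) 0 < q" using less_cSup_iff[OF \<open>R \<noteq> {}\<close> bdd] by blast
      moreover from \<open>q \<in> R\<close> False have "q < s" using R_le[of q] by (cases "q = s") auto
      ultimately have "q \<in> A" "dist q s < d" by (auto simp: R_def dist_real_def)
      with near have "dist (z q) (z s) < dist (z s) v" by blast
      with reset[OF \<open>q \<in> A\<close>] show False by (simp add: dist_commute)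
    qed
    then show ?thesis ..
  qed
  show ?thesis using \<open>0 \<le> s\<close> \<open>s \<le> t\<close> disjoint at_reset by (rule that)
qed

lemma xrate_lower_bound:
  assumes "0 \<le> sS" "0 \<le> sC" "0 \<le> muC" "0 \<le> g" "0 \<le> sA * a - sS * muS"
    and "-1 \<le> x0" "x0 \<le> xi" "xi \<le> tau" "tau \<le> 1"
  shows "(sA * a - sS * muS) * sC * muC * (1 - tau) * (1 + x0) \<le> xrate sA sS sC muS muC a g xi"
proof -
  define A where "A = sA * a + sS * (g - muS)"
  have "sA * a - sS * muS \<le> A" using assms by (simp add: A_def algebra_simps)
  then have "(sA * a - sS * muS) * sC * muC \<le> A * sC * (g + muC)"
    using assms by (intro mult_mono mult_right_mono) auto
  then have "(sA * a - sS * muS) * sC * muC * (1 - tau) \<le> A * sC * (g + muC) * (1 - xi)"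
    using assms \<open>sA * a - sS * muS \<le> A\<close> by (intro mult_mono) auto
  then have "(sA * a - sS * muS) * sC * muC * (1 - tau) * (1 + x0)
      \<le> A * sC * (g + muC) * (1 - xi) * (1 + xi)"
    using assms \<open>sA * a - sS * muS \<le> A\<close> by (intro mult_mono) auto
  then show ?thesis by (simp add: xrate_def A_def)
qed

locale trajectory =
  fixes n :: nat and sA sS sC muS muC r tau :: real and alpha :: "nat \<Rightarrow> real"
    and x y :: "nat \<Rightarrow> real \<Rightarrow> real" and acts :: "nat \<Rightarrow> real set"
  assumes trajectory: "is_trajectory n sA sS sC muS muC r tau alpha x y acts"
begin

lemma
  assumes "i < n"
  shows x_initial: "-1 < x i 0" and y_initial: "y i 0 = 0"
    and acts_pos: "acts i \<subseteq> {0<..}"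
    and x_below_tau: "0 \<le> t \<Longrightarrow> x i t < tau"
    and x_deriv: "0 \<le> t \<Longrightarrow> (x i has_real_derivative
        xrate sA sS sC muS muC (alpha i) (gamma n y i t) (x i t)) (at t within {t..})"
    and y_deriv: "0 \<le> t \<Longrightarrow> (y i has_real_derivative (- r * y i t)) (at t within {t..})"
    and x_isCont: "0 < t \<Longrightarrow> t \<notin> acts i \<Longrightarrow> isCont (x i) t"
    and y_isCont: "0 < t \<Longrightarrow> t \<notin> acts i \<Longrightarrow> isCont (y i) t"
    and x_reset: "a \<in> acts i \<Longrightarrow> x i a = 0"
    and y_reset: "a \<in> acts i \<Longrightarrow> y i a = 1"
  using trajectory assms unfolding is_trajectory_def by auto

lemma
  assumes "i < n" and "0 \<le> s" and "{s<..b} \<inter> acts i = {}"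
  shows x_continuous_on: "continuous_on {s..b} (x i)"
    and y_continuous_on: "continuous_on {s..b} (y i)"
  using assms acts_pos[OF \<open>i < n\<close>]
  by (auto intro!: continuous_on_if_right_derivative x_deriv y_deriv x_isCont y_isCont)

lemma y_nonneg:
  assumes "i < n" and "0 \<le> t"
  shows "0 \<le> y i t"
proof -
  obtain s where "0 \<le> s" "s \<le> t" and no_acts: "{s<..t} \<inter> acts i = {}"
    and "s = 0 \<or> y i s = 1"
    by (rule last_reset_before[OF acts_pos[OF \<open>i < n\<close>] \<open>0 \<le> t\<close> y_reset[OF \<open>i < n\<close>]
      y_isCont[OF \<open>i < n\<close>]])
  then have "0 \<le> y i s" using y_initial[OF \<open>i < n\<close>] by auto
  define h where "h u = exp (r * u) * y i u" for u
  have "h s \<le> h t"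
  proof (rule right_derivative_nonneg_imp_le[OF \<open>s \<le> t\<close>])
    show "continuous_on {s..t} h"
      unfolding h_def
      by (intro continuous_intros y_continuous_on[OF \<open>i < n\<close> \<open>0 \<le> s\<close> no_acts])
    fix u assume "s \<le> u" "u < t"
    show "(h has_real_derivative 0) (at u within {u..})"
      unfolding h_def using \<open>s \<le> u\<close> \<open>0 \<le> s\<close> \<open>i < n\<close>
      by (auto intro!: derivative_eq_intros y_deriv simp: algebra_simps)
  qed simp
  moreover have "0 \<le> h s" using \<open>0 \<le> y i s\<close> by (simp add: h_def)
  ultimately have "0 \<le> h t" by linarith
  then show ?thesis by (simp add: h_def zero_le_mult_iff)
qed

lemma gamma_nonneg:
  assumes "0 \<le> t"
  shows "0 \<le> gamma n y i t"
proof (cases "n = 0")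
  case False
  have "0 \<le> (\<Sum>j\<in>{0..<n} - {i}. y j t)"
    using assms by (intro sum_nonneg) (simp add: y_nonneg)
  moreover have "0 \<le> real n - 1" using False by simp
  ultimately show ?thesis unfolding gamma_def by (rule divide_nonneg_nonneg)
qed (simp add: gamma_def)

end

locale positive_drift_trajectory = trajectory +
  assumes sS_nonneg: "0 \<le> sS" and sC_pos: "0 < sC" and muC_pos: "0 < muC"
    and tau_less_1: "tau < 1"
    and drift_pos: "\<And>i. i < n \<Longrightarrow> 0 < sA * alpha i - sS * muS"
begin

definition min_rate :: "nat \<Rightarrow> real \<Rightarrow> real" where
  "min_rate i x0 = (sA * alpha i - sS * muS) * sC * muC * (1 - tau) * (1 + x0)"

lemma min_rate_pos:
  assumes "i < n" and "-1 < x0"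
  shows "0 < min_rate i x0"
  unfolding min_rate_def
  using assms sC_pos muC_pos tau_less_1 drift_pos[OF \<open>i < n\<close>] by simp

lemma xrate_ge_min_rate:
  assumes "i < n" and "0 \<le> t" and "-1 \<le> x0" and "x0 \<le> x i t"
  shows "min_rate i x0 \<le> xrate sA sS sC muS muC (alpha i) (gamma n y i t) (x i t)"
  unfolding min_rate_def
proof (rule xrate_lower_bound)
  show "0 \<le> gamma n y i t" using \<open>0 \<le> t\<close> by (rule gamma_nonneg)
  show "x i t \<le> tau" using x_below_tau[OF \<open>i < n\<close> \<open>0 \<le> t\<close>] by simp
qed (use assms sS_nonneg sC_pos muC_pos tau_less_1 drift_pos[OF \<open>i < n\<close>] in simp_all)

lemma xrate_nonneg:
  assumes "i < n" and "0 \<le> t" and "-1 < x i t"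
  shows "0 \<le> xrate sA sS sC muS muC (alpha i) (gamma n y i t) (x i t)"
proof -
  have "0 < min_rate i (x i t)" using assms by (intro min_rate_pos)
  also have "\<dots> \<le> xrate sA sS sC muS muC (alpha i) (gamma n y i t) (x i t)"
    using assms by (intro xrate_ge_min_rate) auto
  finally show ?thesis by simp
qed

lemma x_greater_minus_1:
  assumes "i < n" and "0 \<le> t"
  shows "-1 < x i t"
proof -
  obtain s where "0 \<le> s" "s \<le> t" and no_acts: "{s<..t} \<inter> acts i = {}"
    and "s = 0 \<or> x i s = 0"
    by (rule last_reset_before[OF acts_pos[OF \<open>i < n\<close>] \<open>0 \<le> t\<close> x_reset[OF \<open>i < n\<close>]
      x_isCont[OF \<open>i < n\<close>]])
  then have "-1 < x i s" using x_initial[OF \<open>i < n\<close>] by auto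
  moreover have "x i s \<le> x i t"
  proof (rule right_derivative_nonneg_while_above_imp_le[OF \<open>s \<le> t\<close>])
    show "continuous_on {s..t} (x i)" using x_continuous_on[OF \<open>i < n\<close> \<open>0 \<le> s\<close> no_acts] .
    show "-1 < x i s" by fact
    fix u assume "s \<le> u" "u < t"
    with \<open>0 \<le> s\<close> have "0 \<le> u" by simp
    with \<open>i < n\<close> show "(x i has_real_derivative
        xrate sA sS sC muS muC (alpha i) (gamma n y i u) (x i u)) (at u within {u..})"
      "-1 < x i u \<Longrightarrow> 0 \<le> xrate sA sS sC muS muC (alpha i) (gamma n y i u) (x i u)"
      by (rule x_deriv, rule xrate_nonneg)
  qed
  ultimately show ?thesis by simp
qed

lemma acts_unbounded:
  assumes "i < n" and "0 \<le> s"
  shows "\<exists>t\<in>acts i. s < t"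
proof (rule ccontr)
  assume "\<not> ?thesis"
  then have no_acts: "{s<..b} \<inter> acts i = {}" for b by auto
  have cont: "continuous_on {s..b} (x i)" for b
    using x_continuous_on[OF \<open>i < n\<close> \<open>0 \<le> s\<close> no_acts] .
  have deriv: "(x i has_real_derivative xrate sA sS sC muS muC (alpha i) (gamma n y i u) (x i u))
      (at u within {u..})" if "s \<le> u" for u
    using \<open>0 \<le> s\<close> that by (intro x_deriv \<open>i < n\<close>) simp
  have mono: "x i s \<le> x i u" if "s \<le> u" for u
    using that cont deriv
  proof (rule right_derivative_nonneg_imp_le)
    fix v assume "s \<le> v"
    with \<open>0 \<le> s\<close> have "0 \<le> v" by simp
    with \<open>i < n\<close> show "0 \<le> xrate sA sS sC muS muC (alpha i) (gamma n y i v) (x i v)"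
      by (intro xrate_nonneg x_greater_minus_1)
  qed
  define c where "c = min_rate i (x i s)"
  have "0 < c" unfolding c_def using assms by (intro min_rate_pos x_greater_minus_1)
  define b where "b = s + (tau - x i s) / c"
  have "s \<le> b"
    using x_below_tau[OF \<open>i < n\<close> \<open>0 \<le> s\<close>] \<open>0 < c\<close> by (simp add: b_def)
  have "x i s + c * (b - s) \<le> x i b"
    using \<open>s \<le> b\<close> cont deriv
  proof (rule right_derivative_ge_imp_le)
    fix v assume "s \<le> v"
    with \<open>0 \<le> s\<close> have "0 \<le> v" by simp
    with \<open>i < n\<close> \<open>s \<le> v\<close> show "c \<le> xrate sA sS sC muS muC (alpha i) (gamma n y i v) (x i v)"
      unfolding c_def using x_greater_minus_1[OF assms]
      by (intro xrate_ge_min_rate mono) simp_all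
  qed
  moreover have "x i s + c * (b - s) = tau" using \<open>0 < c\<close> by (simp add: b_def)
  moreover have "x i b < tau" using x_below_tau \<open>i < n\<close> \<open>0 \<le> s\<close> \<open>s \<le> b\<close> by simp
  ultimately show False by simp
qed

end

theorem proposition5:
  fixes n :: nat and sA sS sC muS muC r tau :: real
    and alpha :: "nat \<Rightarrow> real"
    and x y :: "nat \<Rightarrow> real \<Rightarrow> real" and acts :: "nat \<Rightarrow> real set"
  assumes "n \<ge> 2" and "sA \<ge> 0" and "sS \<ge> 0" and "sC > 0"
    and "0 \<le> muS" and "muS \<le> 1" and "muC > 0" and "r > 0"
    and "0 < tau" and "tau < 1"
    and "\<forall>i<n. -1 < alpha i \<and> alpha i < 1"
    and "is_trajectory n sA sS sC muS muC r tau alpha x y acts"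
    and "\<forall>i<n. sA * alpha i - sS * muS > 0"
  shows "\<forall>tstart\<ge>0. \<forall>i<n. infinite {t \<in> acts i. t > tstart}"
proof (intro allI impI)
  interpret positive_drift_trajectory n sA sS sC muS muC r tau alpha x y acts
    using assms by unfold_locales auto
  fix tstart :: real and i assume "0 \<le> tstart" "i < n"
  show "infinite {t \<in> acts i. t > tstart}"
  proof
    assume "finite {t \<in> acts i. t > tstart}"
    then have "bdd_above {t \<in> acts i. t > tstart}" by (rule bdd_above_finite)
    then obtain B where B: "\<And>t. t \<in> acts i \<Longrightarrow> tstart < t \<Longrightarrow> t \<le> B"
      unfolding bdd_above_def by auto
    have "0 \<le> max B tstart" using \<open>0 \<le> tstart\<close> by simp
    then obtain t where "t \<in> acts i" "max B tstart < t"
      using acts_unbounded[OF \<open>i < n\<close>] by blast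
    with B[of t] show False by simp
  qed
qed

end
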